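(* There exist absolute constants $K_0,K_1,C>1$ such that the following holds. Let $A\in[0,1]^{m\times n}$ with $\Delta_1\ge K_0$, $x\in\mathbb{R}_{\ge0}^n$ with $Ax\ge\mathbf 1$, and $\alpha=\ln\Delta_1+\ln\ln\Delta_1+K_1$. Let $i\in[m]$ and let $\theta_i\in(0,1]$ satisfy $\sum_{j:A_{i,j}\ge\theta_i}A_{i,j}x_j\ge\frac12$ and $\sum_{j:A_{i,j}\le\theta_i}A_{i,j}x_j\ge\frac12$. If $z$ is the randomized rounding of $\alpha x$, then $\Pr[(Az)_i<1]\le C\,\theta_i/\Delta_1$.
   Context: $\Delta_1=\max_{j\in[n]}\sum_{i=1}^mA_{i,j}$. Randomized rounding of $\alpha x$: $z\in\mathbb{Z}_{\ge0}^n$ is the random vector with independent coordinates $z_j=\lfloor\alpha x_j\rfloor+B_j$, where $B_j\in\{0,1\}$ is Bernoulli with $\Pr[B_j=1]=\alpha x_j-\lfloor\alpha x_j\rfloor$. *)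

theory Defs
  imports "HOL-Probability.Probability"
begin

text \<open>Matrices are A :: nat => nat => real with rows i < m and columns j < n;
  vectors are functions nat => real restricted to indices j < n.\<close>

definition Delta1 :: "nat \<Rightarrow> nat \<Rightarrow> (nat \<Rightarrow> nat \<Rightarrow> real) \<Rightarrow> real" where
  "Delta1 m n A = Max ((\<lambda>j. \<Sum>i<m. A i j) ` {..<n})"

definition rand_round :: "nat \<Rightarrow> (nat \<Rightarrow> real) \<Rightarrow> (nat \<Rightarrow> int) pmf" where
  "rand_round n y = Pi_pmf {..<n} 0
     (\<lambda>j. map_pmf (\<lambda>b. \<lfloor>y j\<rfloor> + (if b then 1 else 0))
                  (bernoulli_pmf (y j - of_int \<lfloor>y j\<rfloor>)))"

end

theory Submission
  imports Defs
begin

text \<open>Chernoff's method for the lower tail: for s \<ge> 0,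
  Pr[(Az)_i < 1] \<le> exp s * E[exp (-s (Az)_i)] \<le> exp (s + \<alpha> \<Sum>_j x_j (exp (-s A_ij) - 1)),
  since each rounded coordinate has a Poisson-type moment generating function. By convexity,
  exp (-s a) - 1 lies below the chord of slope (exp (-s \<theta>) - 1)/\<theta> for a \<le> \<theta> and of slope
  exp (-s) - 1 for a \<le> 1, so the covering constraint and the half mass on entries \<le> \<theta> control
  the exponent. Taking s = ln (\<alpha>/2)/\<theta> makes it at most 3 + ln (\<alpha>/2) - \<alpha> - 1/\<theta>; then
  exp \<alpha> = exp 2 * \<Delta>1 * ln \<Delta>1 and exp (1 - 1/\<theta>) \<le> \<theta> give the bound 2\<theta>/\<Delta>1, so K0 = exp 8
  and K1 = C = 2 work.\<close>

lemma expectation_exp_rounding_le: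
  fixes y t :: real
  assumes "y \<ge> 0"
  shows "measure_pmf.expectation
           (map_pmf (\<lambda>b. \<lfloor>y\<rfloor> + (if b then 1 else 0)) (bernoulli_pmf (y - of_int \<lfloor>y\<rfloor>)))
           (\<lambda>v. exp (t * of_int v))
         \<le> exp (y * (exp t - 1))"
proof -
  define k where "k = real_of_int \<lfloor>y\<rfloor>"
  define q where "q = y - k"
  have "k \<ge> 0" using assms by (simp add: k_def)
  have q: "0 \<le> q" "q \<le> 1"
    unfolding q_def k_def by (auto simp: of_int_floor_le) (smt (verit) floor_correct of_int_1 of_int_add)
  have "measure_pmf.expectation
          (map_pmf (\<lambda>b. \<lfloor>y\<rfloor> + (if b then 1 else 0)) (bernoulli_pmf (y - of_int \<lfloor>y\<rfloor>)))
          (\<lambda>v. exp (t * of_int v))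
        = exp (t * k) * (1 + q * (exp t - 1))"
    using q by (simp add: k_def q_def algebra_simps flip: exp_add)
  also have "\<dots> \<le> exp (k * (exp t - 1)) * exp (q * (exp t - 1))"
  proof (rule mult_mono)
    show "exp (t * k) \<le> exp (k * (exp t - 1))"
      using mult_left_mono[OF exp_ge_add_one_self[of t] \<open>k \<ge> 0\<close>] by (simp add: algebra_simps)
    show "1 + q * (exp t - 1) \<le> exp (q * (exp t - 1))"
      by (rule exp_ge_add_one_self)
    show "0 \<le> 1 + q * (exp t - 1)"
      using q mult_left_mono[of "-1" "exp t - 1" q] by (smt (verit) exp_gt_zero)
  qed simp
  also have "\<dots> = exp (y * (exp t - 1))"
    by (simp add: q_def algebra_simps flip: exp_add)
  finally show ?thesis .
qed

lemma expectation_exp_rand_round_le: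
  fixes y t :: "nat \<Rightarrow> real"
  assumes "\<And>j. j < n \<Longrightarrow> y j \<ge> 0"
  shows "measure_pmf.expectation (rand_round n y) (\<lambda>z. exp (\<Sum>j<n. t j * of_int (z j)))
         \<le> exp (\<Sum>j<n. y j * (exp (t j) - 1))"
proof -
  define p where "p = (\<lambda>j. map_pmf (\<lambda>b. \<lfloor>y j\<rfloor> + (if b then 1 else 0))
                         (bernoulli_pmf (y j - of_int \<lfloor>y j\<rfloor>)))"
  have "measure_pmf.expectation (rand_round n y) (\<lambda>z. exp (\<Sum>j<n. t j * of_int (z j)))
        = measure_pmf.expectation (Pi_pmf {..<n} 0 p) (\<lambda>z. \<Prod>j<n. exp (t j * of_int (z j)))"
    by (simp add: rand_round_def p_def exp_sum)
  also have "\<dots> = (\<Prod>j<n. measure_pmf.expectation (p j) (\<lambda>v. exp (t j * of_int v)))"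
    by (rule expectation_prod_Pi_pmf) (auto simp: p_def intro: integrable_measure_pmf_finite)
  also have "\<dots> \<le> (\<Prod>j<n. exp (y j * (exp (t j) - 1)))"
  proof (intro prod_mono conjI)
    fix j assume "j \<in> {..<n}"
    then show "measure_pmf.expectation (p j) (\<lambda>v. exp (t j * of_int v)) \<le> exp (y j * (exp (t j) - 1))"
      unfolding p_def by (intro expectation_exp_rounding_le assms) simp
  qed (simp add: Bochner_Integration.integral_nonneg)
  also have "\<dots> = exp (\<Sum>j<n. y j * (exp (t j) - 1))"
    by (simp add: exp_sum)
  finally show ?thesis .
qed

lemma prob_rand_round_sum_less_le:
  fixes y a :: "nat \<Rightarrow> real" and s b :: real
  assumes "\<And>j. j < n \<Longrightarrow> y j \<ge> 0" and "s \<ge> 0"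
  shows "measure_pmf.prob (rand_round n y) {z. (\<Sum>j<n. a j * of_int (z j)) < b}
         \<le> exp (s * b + (\<Sum>j<n. y j * (exp (- s * a j) - 1)))"
proof -
  define S where "S = {z. (\<Sum>j<n. a j * of_int (z j)) < b}"
  define g where "g = (\<lambda>z. exp (s * b) * (\<Prod>j<n. exp (- s * a j * of_int (z j))))"
  have "measure_pmf.prob (rand_round n y) S = measure_pmf.expectation (rand_round n y) (indicator S)"
    by simp
  also have "\<dots> \<le> measure_pmf.expectation (rand_round n y) g"
  proof (rule integral_mono)
    show "integrable (measure_pmf (rand_round n y)) g"
      unfolding g_def rand_round_def
      by (intro integrable_mult_right integrable_prod_Pi_pmf) (auto intro: integrable_measure_pmf_finite)
    fix z
    have "g z = exp (s * (b - (\<Sum>j<n. a j * of_int (z j))))"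
      by (simp add: g_def algebra_simps sum_distrib_left sum_negf flip: exp_add exp_sum)
    moreover have "z \<in> S \<Longrightarrow> 0 \<le> s * (b - (\<Sum>j<n. a j * of_int (z j)))"
      using \<open>s \<ge> 0\<close> by (simp add: S_def)
    ultimately show "indicator S z \<le> g z"
      by (auto simp: indicator_def)
  qed (rule measure_pmf.integrable_const_bound[where B=1], auto)
  also have "\<dots> \<le> exp (s * b) * exp (\<Sum>j<n. y j * (exp (- s * a j) - 1))"
    unfolding g_def
    using expectation_exp_rand_round_le[OF assms(1), where t="\<lambda>j. - s * a j"]
    by (simp add: exp_sum)
  finally show ?thesis
    by (simp add: S_def exp_add)
qed

lemma exp_mult_sub_one_le_chord:
  fixes u a c :: real
  assumes "0 \<le> a" "a \<le> c" "0 < c"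
  shows "exp (u * a) - 1 \<le> a / c * (exp (u * c) - 1)"
proof -
  have "exp (1 * ((1 - a / c) *\<^sub>R 0 + (a / c) *\<^sub>R (u * c)))
        \<le> (1 - a / c) * exp (1 * 0) + a / c * exp (1 * (u * c))"
    using assms by (intro convex_onD[OF convex_on_exp]) auto
  then show ?thesis
    using assms by (simp add: algebra_simps)
qed

lemma sum_exp_neg_sub_one_le:
  fixes a w :: "nat \<Rightarrow> real" and \<theta> s :: real
  assumes a: "\<And>j. j < n \<Longrightarrow> 0 \<le> a j \<and> a j \<le> 1" and w: "\<And>j. j < n \<Longrightarrow> 0 \<le> w j"
    and total: "1 \<le> (\<Sum>j<n. a j * w j)"
    and small: "1/2 \<le> (\<Sum>j\<in>{j. j < n \<and> a j \<le> \<theta>}. a j * w j)"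
    and \<theta>: "0 < \<theta>" "\<theta> \<le> 1" and "0 \<le> s"
  shows "(\<Sum>j<n. w j * (exp (- s * a j) - 1)) \<le> ((exp (- s * \<theta>) - 1) / \<theta> + exp (- s) - 1) / 2"
proof -
  define c1 where "c1 = (exp (- s * \<theta>) - 1) / \<theta>"
  define c2 where "c2 = exp (- s) - 1"
  have "c2 \<le> 0" using \<open>0 \<le> s\<close> by (simp add: c2_def)
  have "c1 \<le> c2"
    using exp_mult_sub_one_le_chord[of \<theta> 1 "- s"] \<theta> by (simp add: c1_def c2_def divide_le_eq mult.commute)
  have chord: "exp (- s * a j) - 1 \<le> c2 * a j + (if a j \<le> \<theta> then (c1 - c2) * a j else 0)"
    if "j < n" for j
  proof (cases "a j \<le> \<theta>")
    case True
    have "exp (- s * a j) - 1 \<le> a j / \<theta> * (exp (- s * \<theta>) - 1)"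
      using a[OF that] True \<theta> by (intro exp_mult_sub_one_le_chord) auto
    then show ?thesis
      using True by (simp add: c1_def algebra_simps diff_divide_distrib)
  next
    case False
    have "exp (- s * a j) - 1 \<le> a j / 1 * (exp (- s * 1) - 1)"
      using a[OF that] by (intro exp_mult_sub_one_le_chord) auto
    then show ?thesis
      using False by (simp add: c2_def algebra_simps)
  qed
  have "(\<Sum>j<n. w j * (exp (- s * a j) - 1))
        \<le> (\<Sum>j<n. w j * (c2 * a j + (if a j \<le> \<theta> then (c1 - c2) * a j else 0)))"
    by (intro sum_mono mult_left_mono chord w) auto
  also have "\<dots> = (\<Sum>j<n. c2 * (a j * w j) + (c1 - c2) * (if a j \<le> \<theta> then a j * w j else 0))"
    by (intro sum.cong) (auto simp: algebra_simps)
  also have "\<dots> = c2 * (\<Sum>j<n. a j * w j) + (c1 - c2) * (\<Sum>j\<in>{j. j < n \<and> a j \<le> \<theta>}. a j * w j)"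
    by (simp add: sum.distrib sum.inter_filter[of "{..<n}", simplified] flip: sum_distrib_left)
  also have "\<dots> \<le> c2 * 1 + (c1 - c2) * (1/2)"
    using \<open>c2 \<le> 0\<close> \<open>c1 \<le> c2\<close> by (intro add_mono mult_left_mono_neg total small) auto
  finally show ?thesis
    by (simp add: c1_def c2_def field_simps)
qed

lemma chernoff_exponent_le:
  fixes \<mu> \<theta> :: real
  assumes "1 \<le> \<mu>" "ln \<mu> + 2 \<le> \<mu>" and \<theta>: "0 < \<theta>" "\<theta> \<le> 1"
  defines "s \<equiv> ln \<mu> / \<theta>"
  shows "s + \<mu> * ((exp (- s * \<theta>) - 1) / \<theta> + exp (- s) - 1) \<le> 3 + ln \<mu> - 2 * \<mu> - 1 / \<theta>"
proof -
  have "0 < \<mu>" using assms by simp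
  have "ln \<mu> \<le> s"
    using \<theta> ln_ge_zero[OF \<open>1 \<le> \<mu>\<close>] by (simp add: s_def le_divide_eq mult_left_le)
  then have "\<mu> * exp (- s) \<le> \<mu> * exp (- ln \<mu>)"
    using \<open>0 < \<mu>\<close> by simp
  also have "\<dots> = 1"
    using \<open>0 < \<mu>\<close> by (simp add: exp_minus)
  finally have "\<mu> * exp (- s) \<le> 1" .
  have "exp (- s * \<theta>) = 1 / \<mu>"
    using \<theta> \<open>0 < \<mu>\<close> by (simp add: s_def exp_minus inverse_eq_divide)
  then have "s + \<mu> * ((exp (- s * \<theta>) - 1) / \<theta> + exp (- s) - 1)
             = s + (1 - \<mu>) / \<theta> + \<mu> * exp (- s) - \<mu>"
    using \<open>0 < \<mu>\<close> by (simp add: field_simps)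
  also have "\<dots> \<le> (ln \<mu> + 1 - \<mu>) / \<theta> + 1 - \<mu>"
    using \<open>\<mu> * exp (- s) \<le> 1\<close> by (simp add: s_def add_divide_distrib diff_divide_distrib)
  \<comment> \<open>With \<beta> = \<mu> - ln \<mu> - 1 \<ge> 1, use -\<beta>/\<theta> \<le> -\<beta> - (1/\<theta> - 1).\<close>
  also have "(ln \<mu> + 1 - \<mu>) / \<theta> \<le> ln \<mu> + 1 - \<mu> - (1 / \<theta> - 1)"
  proof -
    have "1 * (1 / \<theta> - 1) \<le> (\<mu> - ln \<mu> - 1) * (1 / \<theta> - 1)"
      using assms by (intro mult_right_mono) auto
    then show ?thesis
      using \<theta> by (simp add: field_simps)
  qed
  finally show ?thesis
    by simp
qed

lemma ln_add_two_le:
  fixes \<mu> :: real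
  assumes "4 \<le> \<mu>"
  shows "ln \<mu> + 2 \<le> \<mu>"
proof -
  have "ln (\<mu> / 2) \<le> \<mu> / 2 - 1"
    using assms by (intro ln_le_minus_one) auto
  moreover have "ln (\<mu> / 2) = ln \<mu> - ln 2"
    using assms by (simp add: ln_div)
  ultimately show ?thesis
    using ln_2_less_1 assms by linarith
qed

lemma exp_one_minus_inverse_le:
  fixes \<theta> :: real
  assumes "0 < \<theta>"
  shows "exp (1 - 1 / \<theta>) \<le> \<theta>"
proof -
  have "ln (1 / \<theta>) \<le> 1 / \<theta> - 1"
    using assms by (intro ln_le_minus_one) simp
  then have "1 - 1 / \<theta> \<le> ln \<theta>"
    using assms by (simp add: ln_div)
  then show ?thesis
    using assms by (metis exp_le_cancel_iff exp_ln)
qed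

lemma rounding_factor_bounds:
  fixes D :: real
  assumes "exp 8 \<le> D"
  shows "10 \<le> ln D + ln (ln D) + 2" and "ln D + ln (ln D) + 2 \<le> 4 * ln D"
proof -
  have "8 \<le> ln D"
    using assms by (metis exp_gt_zero less_le_trans ln_exp ln_le_cancel_iff)
  moreover have "0 \<le> ln (ln D)" "ln (ln D) \<le> ln D - 1"
    using \<open>8 \<le> ln D\<close> by (auto intro: ln_ge_zero ln_le_minus_one)
  ultimately show "10 \<le> ln D + ln (ln D) + 2" and "ln D + ln (ln D) + 2 \<le> 4 * ln D"
    by linarith+
qed

lemma exp_rounding_exponent_le:
  fixes D \<theta> :: real
  assumes "exp 8 \<le> D" "0 < \<theta>"
  defines "\<alpha> \<equiv> ln D + ln (ln D) + 2"
  shows "exp (3 + ln (\<alpha> / 2) - \<alpha> - 1 / \<theta>) \<le> 2 * \<theta> / D"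
proof -
  have "1 < D"
    using assms(1) one_less_exp_iff[of 8] by linarith
  then have "0 < D" "0 < ln D"
    by auto
  have "0 < \<alpha>" "\<alpha> \<le> 4 * ln D"
    using rounding_factor_bounds[OF assms(1)] by (auto simp: \<alpha>_def)
  have "exp \<alpha> = D * ln D * exp 2"
    using \<open>0 < D\<close> \<open>0 < ln D\<close> by (simp add: \<alpha>_def exp_add)
  have "exp (3 + ln (\<alpha> / 2) - \<alpha> - 1 / \<theta>) = exp (2 + ln (\<alpha> / 2) - \<alpha> + (1 - 1 / \<theta>))"
    by simp
  also have "\<dots> = exp 2 * exp (ln (\<alpha> / 2)) / exp \<alpha> * exp (1 - 1 / \<theta>)"
    by (simp only: exp_add exp_diff)
  also have "\<dots> = \<alpha> / 2 / (D * ln D) * exp (1 - 1 / \<theta>)"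
    using \<open>0 < \<alpha>\<close> \<open>exp \<alpha> = D * ln D * exp 2\<close> by simp
  also have "\<dots> \<le> 2 / D * \<theta>"
  proof (rule mult_mono)
    show "\<alpha> / 2 / (D * ln D) \<le> 2 / D"
      using \<open>\<alpha> \<le> 4 * ln D\<close> \<open>0 < D\<close> \<open>0 < ln D\<close> by (simp add: field_simps)
    show "exp (1 - 1 / \<theta>) \<le> \<theta>"
      using assms(2) by (rule exp_one_minus_inverse_le)
  qed (use \<open>0 < D\<close> in auto)
  finally show ?thesis
    by simp
qed

theorem mainTheorem11:
  shows "\<exists>K0 K1 C :: real. K0 > 1 \<and> K1 > 1 \<and> C > 1 \<and>
    (\<forall>(m::nat) (n::nat) (A :: nat \<Rightarrow> nat \<Rightarrow> real) (x :: nat \<Rightarrow> real) (i::nat) (\<theta>::real).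
       (\<forall>i'<m. \<forall>j<n. 0 \<le> A i' j \<and> A i' j \<le> 1) \<longrightarrow>
       Delta1 m n A \<ge> K0 \<longrightarrow>
       (\<forall>j<n. x j \<ge> 0) \<longrightarrow>
       (\<forall>i'<m. (\<Sum>j<n. A i' j * x j) \<ge> 1) \<longrightarrow>
       i < m \<longrightarrow>
       0 < \<theta> \<longrightarrow> \<theta> \<le> 1 \<longrightarrow>
       (\<Sum>j\<in>{j. j < n \<and> A i j \<ge> \<theta>}. A i j * x j) \<ge> 1/2 \<longrightarrow>
       (\<Sum>j\<in>{j. j < n \<and> A i j \<le> \<theta>}. A i j * x j) \<ge> 1/2 \<longrightarrow>
       (let \<alpha> = ln (Delta1 m n A) + ln (ln (Delta1 m n A)) + K1 in
        measure_pmf.prob (rand_round n (\<lambda>j. \<alpha> * x j))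
          {z. (\<Sum>j<n. A i j * of_int (z j)) < 1}
        \<le> C * \<theta> / Delta1 m n A))"
proof (rule exI[of _ "exp 8"], rule exI[of _ 2], rule exI[of _ 2], intro conjI allI impI)
  fix m n :: nat and A :: "nat \<Rightarrow> nat \<Rightarrow> real" and x :: "nat \<Rightarrow> real" and i :: nat and \<theta> :: real
  assume A: "\<forall>i'<m. \<forall>j<n. 0 \<le> A i' j \<and> A i' j \<le> 1" and D: "exp 8 \<le> Delta1 m n A"
    and x: "\<forall>j<n. 0 \<le> x j" and cover: "\<forall>i'<m. 1 \<le> (\<Sum>j<n. A i' j * x j)" and "i < m"
    and \<theta>: "0 < \<theta>" "\<theta> \<le> 1"
    and "1/2 \<le> (\<Sum>j\<in>{j. j < n \<and> \<theta> \<le> A i j}. A i j * x j)"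
    and small: "1/2 \<le> (\<Sum>j\<in>{j. j < n \<and> A i j \<le> \<theta>}. A i j * x j)"
  define \<alpha> where "\<alpha> = ln (Delta1 m n A) + ln (ln (Delta1 m n A)) + 2"
  define s where "s = ln (\<alpha> / 2) / \<theta>"
  have "10 \<le> \<alpha>"
    using rounding_factor_bounds(1)[OF D] by (simp add: \<alpha>_def)
  then have "0 \<le> s"
    using \<theta> by (simp add: s_def)
  have "measure_pmf.prob (rand_round n (\<lambda>j. \<alpha> * x j)) {z. (\<Sum>j<n. A i j * of_int (z j)) < 1}
        \<le> exp (s * 1 + (\<Sum>j<n. \<alpha> * x j * (exp (- s * A i j) - 1)))"
    using x \<open>10 \<le> \<alpha>\<close> \<open>0 \<le> s\<close> by (intro prob_rand_round_sum_less_le) auto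
  also have "\<dots> \<le> exp (s + \<alpha> / 2 * ((exp (- s * \<theta>) - 1) / \<theta> + exp (- s) - 1))"
    using mult_left_mono[OF sum_exp_neg_sub_one_le[of n "A i" x \<theta> s], of \<alpha>]
      A x cover small \<theta> \<open>i < m\<close> \<open>10 \<le> \<alpha>\<close> \<open>0 \<le> s\<close>
    by (simp add: sum_distrib_left mult.assoc)
  also have "\<dots> \<le> exp (3 + ln (\<alpha> / 2) - \<alpha> - 1 / \<theta>)"
    using chernoff_exponent_le[of "\<alpha> / 2" \<theta>] ln_add_two_le[of "\<alpha> / 2"] \<open>10 \<le> \<alpha>\<close> \<theta>
    by (simp add: s_def)
  also have "\<dots> \<le> 2 * \<theta> / Delta1 m n A"
    using exp_rounding_exponent_le[OF D \<theta>(1)] by (simp add: \<alpha>_def)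
  finally show "let \<alpha> = ln (Delta1 m n A) + ln (ln (Delta1 m n A)) + 2 in
      measure_pmf.prob (rand_round n (\<lambda>j. \<alpha> * x j)) {z. (\<Sum>j<n. A i j * of_int (z j)) < 1}
      \<le> 2 * \<theta> / Delta1 m n A"
    by (simp add: \<alpha>_def)
qed simp_all

end
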